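(* Fix a sample $(x,u)$, generative parameters $\theta$, inference parameters $\phi$ and $\epsilon>0$. Suppose there is a function $g:\mathbb{R}^{d_Z}\to\mathbb{R}$ with $\mathrm{SNR}(g)\ge 1/\epsilon$. Then for every $\alpha\in[0,1]$, $$\mathrm{ELBO}_{\theta,\phi}(\alpha;x,u)-\mathrm{ELBO}_{\theta,\phi}(0;x,u)\ \ge\ \mathrm{LB}(\alpha,\epsilon,\Delta_{1-0}(x,u)),$$ where $\mathrm{LB}(\alpha,\epsilon,\Delta):=\alpha\Delta+\alpha\int_{\alpha}^{1}\frac{1-t}{t(1-t)+\epsilon}\,dt+(1-\alpha)\int_{0}^{\alpha}\frac{t}{t(1-t)+\epsilon}\,dt$.
   Context: Observations $x\in\mathbb{R}^{d_X}$, covariates $u\in\mathbb{R}^{d_U}$, latents $z\in\mathbb{R}^{d_Z}$, $d_Z<d_X$. Generative parameters $\theta=(f,T,\lambda)$: mixing function $f$, label prior density $p_{T,\lambda}(z|u)=\prod_{i=1}^{d_Z}\exp(\lambda_i(u)\cdot T_i(z_i)-A(u)+B(z_i))$, decoder density $p_f(x|z)=p_\epsilon(x-f(z))$ for a fixed noise density $p_\epsilon$. Inference parameters $\phi$ determine an encoder density $q_\phi(z|x)$ and posterior density $q_\phi(z|x,u)$. For $\alpha\in[0,1]$, with $m_\alpha=\alpha q_\phi(\cdot|x)+(1-\alpha)q_\phi(\cdot|x,u)$, $\mathrm{ELBO}_{\theta,\phi}(\alpha;x,u)=\mathbb{E}_{z\sim m_\alpha}\log p_f(x|z)-\mathcal{D}_{\mathrm{KL}}(m_\alpha\|p_{T,\lambda}(\cdot|u))$,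 and $\Delta_{1-0}(x,u):=\mathrm{ELBO}_{\theta,\phi}(1;x,u)-\mathrm{ELBO}_{\theta,\phi}(0;x,u)$. The signal-to-noise ratio of $g$ is $$\mathrm{SNR}(g)=\frac{\big(\mathbb{E}_{q_\phi(z|x)}g(z)-\mathbb{E}_{q_\phi(z|x,u)}g(z)\big)^2}{\max\big(\mathrm{Var}_{q_\phi(z|x)}g(z),\ \mathrm{Var}_{q_\phi(z|x,u)}g(z)\big)}.$$ All expectations, variances and divergences appearing are assumed finite. *)

theory Defs
  imports "HOL-Analysis.Analysis"
begin

text \<open>Latent space R^{d_Z} = real^'d, observation space R^{d_X} = real^'dx,
  covariate space R^{d_U} = real^'du. All densities are w.r.t. Lebesgue measure lborel.\<close>

definition is_density :: "('a::euclidean_space \<Rightarrow> real) \<Rightarrow> bool" where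
  "is_density p \<longleftrightarrow> (\<forall>z. 0 \<le> p z) \<and> integrable lborel p \<and> integral\<^sup>L lborel p = 1"

definition prior_dens ::
  "('d::finite \<Rightarrow> real \<Rightarrow> real) \<Rightarrow> ('d \<Rightarrow> real^'du \<Rightarrow> real) \<Rightarrow> (real^'du \<Rightarrow> real)
   \<Rightarrow> (real \<Rightarrow> real) \<Rightarrow> real^'du \<Rightarrow> real^'d \<Rightarrow> real" where
  "prior_dens T lam A B u z = (\<Prod>i\<in>UNIV. exp (lam i u * T i (z $ i) - A u + B (z $ i)))"

definition dec_dens :: "(real^'dx \<Rightarrow> real) \<Rightarrow> (real^'d \<Rightarrow> real^'dx) \<Rightarrow> real^'dx \<Rightarrow> real^'d \<Rightarrow> real" where
  "dec_dens p_eps f x z = p_eps (x - f z)"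

definition mix :: "real \<Rightarrow> ('a \<Rightarrow> real) \<Rightarrow> ('a \<Rightarrow> real) \<Rightarrow> 'a \<Rightarrow> real" where
  "mix \<alpha> q1 q0 z = \<alpha> * q1 z + (1 - \<alpha>) * q0 z"

definition KL :: "('a::euclidean_space \<Rightarrow> real) \<Rightarrow> ('a \<Rightarrow> real) \<Rightarrow> real" where
  "KL m p = (LINT z|lborel. m z * ln (m z / p z))"

definition ELBO ::
  "(real^'dx \<Rightarrow> real) \<Rightarrow> (real^'d \<Rightarrow> real^'dx)
   \<Rightarrow> ('d::finite \<Rightarrow> real \<Rightarrow> real) \<Rightarrow> ('d \<Rightarrow> real^'du \<Rightarrow> real) \<Rightarrow> (real^'du \<Rightarrow> real) \<Rightarrow> (real \<Rightarrow> real)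
   \<Rightarrow> (real^'dx \<Rightarrow> real^'d \<Rightarrow> real) \<Rightarrow> (real^'dx \<Rightarrow> real^'du \<Rightarrow> real^'d \<Rightarrow> real)
   \<Rightarrow> real \<Rightarrow> real^'dx \<Rightarrow> real^'du \<Rightarrow> real" where
  "ELBO p_eps f T lam A B q_enc q_post \<alpha> x u =
     (LINT z|lborel. mix \<alpha> (q_enc x) (q_post x u) z * ln (dec_dens p_eps f x z))
     - KL (mix \<alpha> (q_enc x) (q_post x u)) (prior_dens T lam A B u)"

definition Delta10 where
  "Delta10 p_eps f T lam A B q_enc q_post x u =
     ELBO p_eps f T lam A B q_enc q_post 1 x u - ELBO p_eps f T lam A B q_enc q_post 0 x u"

definition expect :: "('a::euclidean_space \<Rightarrow> real) \<Rightarrow> ('a \<Rightarrow> real) \<Rightarrow> real" where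
  "expect q g = (LINT z|lborel. q z * g z)"

definition var :: "('a::euclidean_space \<Rightarrow> real) \<Rightarrow> ('a \<Rightarrow> real) \<Rightarrow> real" where
  "var q g = (LINT z|lborel. q z * (g z)\<^sup>2) - (expect q g)\<^sup>2"

definition SNR :: "('a::euclidean_space \<Rightarrow> real) \<Rightarrow> ('a \<Rightarrow> real) \<Rightarrow> ('a \<Rightarrow> real) \<Rightarrow> real" where
  "SNR q1 q0 g = (expect q1 g - expect q0 g)\<^sup>2 / max (var q1 g) (var q0 g)"

definition LB :: "real \<Rightarrow> real \<Rightarrow> real \<Rightarrow> real" where
  "LB \<alpha> \<epsilon> \<Delta> = \<alpha> * \<Delta>
     + \<alpha> * integral {\<alpha>..1} (\<lambda>t. (1 - t) / (t * (1 - t) + \<epsilon>))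
     + (1 - \<alpha>) * integral {0..\<alpha>} (\<lambda>t. t / (t * (1 - t) + \<epsilon>))"

end

theory Submission
  imports Defs "HOL-Real_Asymp.Real_Asymp"
begin

text \<open>With \<open>q\<^sub>1\<close>, \<open>q\<^sub>0\<close> the encoder and posterior and \<open>m\<^sub>t = (1 - t) q\<^sub>0 + t q\<^sub>1\<close>, the
  reconstruction term of the ELBO is affine in \<open>\<alpha>\<close>, so \<open>ELBO \<alpha> - ELBO 0 - \<alpha> \<Delta>\<close> is the Jensen gap
  \<open>\<alpha> KL(q\<^sub>1) + (1 - \<alpha>) KL(q\<^sub>0) - KL(m\<^sub>\<alpha>) = \<integral> xlnx_gap (q\<^sub>0 z) (q\<^sub>1 z) \<alpha> dz\<close>. Pointwise in \<open>z\<close>,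
  the gap vanishes at \<open>\<alpha> = 0, 1\<close> and its second derivative is
  \<open>-(q\<^sub>1 - q\<^sub>0)\<^sup>2 / m\<^sub>\<alpha> \<le> -(2 (q\<^sub>1 - q\<^sub>0) h - m\<^sub>\<alpha> h\<^sup>2)\<close> for any \<open>h\<close>, so it dominates the Green
  potential of the right-hand side. For \<open>h = (g - E\<^sub>m\<^sub>t g) / (D (t (1 - t) + \<epsilon>))\<close> with
  \<open>D = E\<^sub>q\<^sub>1 g - E\<^sub>q\<^sub>0 g\<close>, the \<open>z\<close>-integral of that right-hand side is at least
  \<open>1 / (t (1 - t) + \<epsilon>)\<close>, because the SNR hypothesis bounds the variance of \<open>g\<close> under \<open>m\<^sub>t\<close> by
  \<open>(t (1 - t) + \<epsilon>) D\<^sup>2\<close>; and the Green potential of \<open>1 / (t (1 - t) + \<epsilon>)\<close> is \<open>LB - \<alpha> \<Delta>\<close>.\<close>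

lemma continuous_on_xlnx: "continuous_on {0..} (\<lambda>x::real. x * ln x)"
proof -
  have "continuous (at x within {0..}) (\<lambda>x::real. x * ln x)" if "x \<ge> 0" for x
  proof (cases "x = 0")
    case True
    have "((\<lambda>x::real. x * ln x) \<longlongrightarrow> 0) (at_right 0)"
      by real_asymp
    then show ?thesis
      using True by (simp add: continuous_within at_within_Ici_at_right)
  next
    case False
    with that have "isCont (\<lambda>x::real. x * ln x) x"
      by (auto intro!: continuous_intros)
    then show ?thesis
      using continuous_at_imp_continuous_at_within by blast
  qed
  then show ?thesis
    by (simp add: continuous_on_eq_continuous_within)
qed

lemma nonneg_if_boundary_zero_deriv_antimono:
  fixes H H' :: "real \<Rightarrow> real"
  assumes cont: "continuous_on {0..1} H" and ends: "H 0 = 0" "H 1 = 0"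
    and deriv: "\<And>s. 0 < s \<Longrightarrow> s < 1 \<Longrightarrow> (H has_real_derivative H' s) (at s)"
    and antimono: "\<And>s t. 0 < s \<Longrightarrow> s \<le> t \<Longrightarrow> t < 1 \<Longrightarrow> H' t \<le> H' s"
    and \<alpha>: "\<alpha> \<in> {0..1}"
  shows "0 \<le> H \<alpha>"
proof (cases "\<alpha> = 0 \<or> \<alpha> = 1")
  case True
  then show ?thesis
    using ends by auto
next
  case False
  with \<alpha> have \<alpha>: "0 < \<alpha>" "\<alpha> < 1"
    by auto
  have mean_value: "\<exists>\<xi>. a < \<xi> \<and> \<xi> < b \<and> H b - H a = H' \<xi> * (b - a)"
    if "0 \<le> a" "a < b" "b \<le> 1" for a b
  proof -
    have "continuous_on {a..b} H"
      using cont by (rule continuous_on_subset) (use that in auto)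
    moreover have "(H has_derivative (*) (H' \<xi>)) (at \<xi>)" if "a < \<xi>" "\<xi> < b" for \<xi>
      using deriv[of \<xi>] that \<open>0 \<le> a\<close> \<open>b \<le> 1\<close> by (simp add: has_field_derivative_imp_has_derivative)
    ultimately obtain \<xi> where "a < \<xi>" "\<xi> < b" "H b - H a = H' \<xi> * (b - a)"
      using mvt[OF \<open>a < b\<close>, of H "\<lambda>\<xi>. (*) (H' \<xi>)"] by blast
    then show ?thesis
      by blast
  qed
  obtain \<xi>\<^sub>1 where \<xi>\<^sub>1: "0 < \<xi>\<^sub>1" "\<xi>\<^sub>1 < \<alpha>" "H \<alpha> = H' \<xi>\<^sub>1 * \<alpha>"
    using mean_value[of 0 \<alpha>] \<alpha> ends by auto
  obtain \<xi>\<^sub>2 where \<xi>\<^sub>2: "\<alpha> < \<xi>\<^sub>2" "\<xi>\<^sub>2 < 1" "- H \<alpha> = H' \<xi>\<^sub>2 * (1 - \<alpha>)"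
    using mean_value[of \<alpha> 1] \<alpha> ends by auto
  have "H' \<xi>\<^sub>2 * (\<alpha> * (1 - \<alpha>)) \<le> H' \<xi>\<^sub>1 * (\<alpha> * (1 - \<alpha>))"
    using antimono[of \<xi>\<^sub>1 \<xi>\<^sub>2] \<xi>\<^sub>1 \<xi>\<^sub>2 \<alpha> by (intro mult_right_mono) auto
  then have "- H \<alpha> * \<alpha> \<le> H \<alpha> * (1 - \<alpha>)"
    using \<xi>\<^sub>1(3) \<xi>\<^sub>2(3) by (simp add: algebra_simps)
  then show ?thesis
    by (simp add: algebra_simps)
qed

text \<open>The solution of \<open>-u'' = \<rho>\<close> on \<open>[0, 1]\<close> with \<open>u 0 = 0 = u 1\<close>, written with the Green's
  function of the Dirichlet problem.\<close>

definition green_potential :: "(real \<Rightarrow> real) \<Rightarrow> real \<Rightarrow> real" where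
  "green_potential \<rho> s =
     (1 - s) * integral {0..s} (\<lambda>t. t * \<rho> t) + s * integral {s..1} (\<lambda>t. (1 - t) * \<rho> t)"

lemma green_potential_has_real_derivative:
  assumes \<rho>: "continuous_on {0..1} \<rho>" and s: "s \<in> {0..1}"
  shows "(green_potential \<rho> has_real_derivative
            integral {s..1} (\<lambda>t. (1 - t) * \<rho> t) - integral {0..s} (\<lambda>t. t * \<rho> t))
           (at s within {0..1})"
    and "((\<lambda>s. integral {s..1} (\<lambda>t. (1 - t) * \<rho> t) - integral {0..s} (\<lambda>t. t * \<rho> t))
           has_real_derivative - \<rho> s) (at s within {0..1})"
proof -
  have "continuous_on {0..1} (\<lambda>t. t * \<rho> t)" "continuous_on {0..1} (\<lambda>t. (1 - t) * \<rho> t)"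
    using \<rho> by (auto intro!: continuous_intros)
  note left = integral_has_real_derivative[OF this(1) s]
    and right = integral_has_real_derivative'[OF this(2) s]
  show "(green_potential \<rho> has_real_derivative
          integral {s..1} (\<lambda>t. (1 - t) * \<rho> t) - integral {0..s} (\<lambda>t. t * \<rho> t))
         (at s within {0..1})"
    unfolding green_potential_def
    by (rule derivative_eq_intros left right refl | simp add: algebra_simps)+
  show "((\<lambda>s. integral {s..1} (\<lambda>t. (1 - t) * \<rho> t) - integral {0..s} (\<lambda>t. t * \<rho> t))
          has_real_derivative - \<rho> s) (at s within {0..1})"
    by (rule derivative_eq_intros left right refl | simp add: algebra_simps)+
qed

lemma continuous_on_green_potential:
  "continuous_on {0..1} \<rho> \<Longrightarrow> continuous_on {0..1} (green_potential \<rho>)"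
  using green_potential_has_real_derivative(1) DERIV_continuous continuous_on_eq_continuous_within
  by blast

lemma green_potential_sum:
  assumes J: "finite J" and c: "\<And>j. j \<in> J \<Longrightarrow> continuous_on {0..1} (c j)"
    and \<alpha>: "\<alpha> \<in> {0..1}"
  shows "green_potential (\<lambda>t. \<Sum>j\<in>J. c j t * v j) \<alpha> = (\<Sum>j\<in>J. green_potential (c j) \<alpha> * v j)"
proof -
  have "(\<lambda>t. t * c j t * v j) integrable_on {0..\<alpha>}"
    and "(\<lambda>t. (1 - t) * c j t * v j) integrable_on {\<alpha>..1}" if "j \<in> J" for j
    by (rule integrable_continuous_interval, rule continuous_on_subset[of "{0..1}"],
        use c[OF that] \<alpha> in \<open>auto intro!: continuous_intros\<close>)+
  note integrable = this
  have left: "integral {0..\<alpha>} (\<lambda>t. t * (\<Sum>j\<in>J. c j t * v j))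
               = (\<Sum>j\<in>J. integral {0..\<alpha>} (\<lambda>t. t * c j t * v j))"
    by (subst integral_sum[symmetric]) (use integrable J in \<open>auto simp: sum_distrib_left mult.assoc\<close>)
  have right: "integral {\<alpha>..1} (\<lambda>t. (1 - t) * (\<Sum>j\<in>J. c j t * v j))
               = (\<Sum>j\<in>J. integral {\<alpha>..1} (\<lambda>t. (1 - t) * c j t * v j))"
    by (subst integral_sum[symmetric]) (use integrable J in \<open>auto simp: sum_distrib_left mult.assoc\<close>)
  have "green_potential (\<lambda>t. \<Sum>j\<in>J. c j t * v j) \<alpha>
      = (1 - \<alpha>) * (\<Sum>j\<in>J. integral {0..\<alpha>} (\<lambda>t. t * c j t) * v j)
        + \<alpha> * (\<Sum>j\<in>J. integral {\<alpha>..1} (\<lambda>t. (1 - t) * c j t) * v j)"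
    unfolding green_potential_def left right integral_mult_left ..
  also have "\<dots> = (\<Sum>j\<in>J. green_potential (c j) \<alpha> * v j)"
    unfolding sum_distrib_left sum.distrib[symmetric] green_potential_def
    by (rule sum.cong) (auto simp: algebra_simps)
  finally show ?thesis .
qed

lemma green_potential_mono:
  assumes \<rho>\<^sub>1: "continuous_on {0..1} \<rho>\<^sub>1" and \<rho>\<^sub>2: "continuous_on {0..1} \<rho>\<^sub>2"
    and le: "\<And>t. t \<in> {0..1} \<Longrightarrow> \<rho>\<^sub>1 t \<le> \<rho>\<^sub>2 t" and \<alpha>: "\<alpha> \<in> {0..1}"
  shows "green_potential \<rho>\<^sub>1 \<alpha> \<le> green_potential \<rho>\<^sub>2 \<alpha>"
proof -
  have "integral {0..\<alpha>} (\<lambda>t. t * \<rho>\<^sub>1 t) \<le> integral {0..\<alpha>} (\<lambda>t. t * \<rho>\<^sub>2 t)"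
    by (rule integral_le; (rule integrable_continuous_interval, rule continuous_on_subset[of "{0..1}"])?)
       (use \<rho>\<^sub>1 \<rho>\<^sub>2 \<alpha> le in \<open>auto intro!: continuous_intros mult_left_mono\<close>)
  moreover
  have "integral {\<alpha>..1} (\<lambda>t. (1 - t) * \<rho>\<^sub>1 t) \<le> integral {\<alpha>..1} (\<lambda>t. (1 - t) * \<rho>\<^sub>2 t)"
    by (rule integral_le; (rule integrable_continuous_interval, rule continuous_on_subset[of "{0..1}"])?)
       (use \<rho>\<^sub>1 \<rho>\<^sub>2 \<alpha> le in \<open>auto intro!: continuous_intros mult_left_mono\<close>)
  ultimately show ?thesis
    unfolding green_potential_def using \<alpha> by (intro add_mono mult_left_mono) auto
qed

text \<open>Comparison principle: \<open>\<Phi> - green_potential \<rho>\<close> vanishes at the ends and is concave.\<close>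

lemma green_potential_le:
  assumes \<rho>: "continuous_on {0..1} \<rho>"
    and \<Phi>: "continuous_on {0..1} \<Phi>" "\<Phi> 0 = 0" "\<Phi> 1 = 0"
    and \<Phi>': "\<And>s. 0 < s \<Longrightarrow> s < 1 \<Longrightarrow> (\<Phi> has_real_derivative \<Phi>' s) (at s)"
    and \<Phi>'': "\<And>s. 0 < s \<Longrightarrow> s < 1 \<Longrightarrow> (\<Phi>' has_real_derivative \<Phi>'' s) (at s)"
    and le: "\<And>s. 0 < s \<Longrightarrow> s < 1 \<Longrightarrow> \<rho> s \<le> - \<Phi>'' s"
    and \<alpha>: "\<alpha> \<in> {0..1}"
  shows "green_potential \<rho> \<alpha> \<le> \<Phi> \<alpha>"
proof -
  define G' where
    "G' s = integral {s..1} (\<lambda>t. (1 - t) * \<rho> t) - integral {0..s} (\<lambda>t. t * \<rho> t)" for s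
  have at_interior: "at s within {0..1} = at s" if "0 < s" "s < 1" for s :: real
    using that by (intro at_within_interior) auto
  have G: "(green_potential \<rho> has_real_derivative G' s) (at s)"
    "(G' has_real_derivative - \<rho> s) (at s)" if "0 < s" "s < 1" for s
    using green_potential_has_real_derivative[OF \<rho>, of s, folded G'_def] that
    by (simp_all add: at_interior)
  have "0 \<le> \<Phi> \<alpha> - green_potential \<rho> \<alpha>"
  proof (rule nonneg_if_boundary_zero_deriv_antimono
      [where H = "\<lambda>s. \<Phi> s - green_potential \<rho> s" and H' = "\<lambda>s. \<Phi>' s - G' s"])
    show "continuous_on {0..1} (\<lambda>s. \<Phi> s - green_potential \<rho> s)"
      by (intro continuous_intros \<Phi> continuous_on_green_potential \<rho>)
    show "\<Phi> 0 - green_potential \<rho> 0 = 0" "\<Phi> 1 - green_potential \<rho> 1 = 0"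
      using \<Phi> by (simp_all add: green_potential_def)
    show "((\<lambda>s. \<Phi> s - green_potential \<rho> s) has_real_derivative \<Phi>' s - G' s) (at s)"
      if "0 < s" "s < 1" for s
      using DERIV_diff[OF \<Phi>'[OF that] G(1)[OF that]] .
    show "\<Phi>' t - G' t \<le> \<Phi>' s - G' s" if "0 < s" "s \<le> t" "t < 1" for s t
    proof (rule DERIV_nonpos_imp_nonincreasing[OF \<open>s \<le> t\<close>])
      fix r
      assume "s \<le> r" "r \<le> t"
      with that have r: "0 < r" "r < 1"
        by auto
      have "((\<lambda>s. \<Phi>' s - G' s) has_real_derivative \<Phi>'' r - - \<rho> r) (at r)"
        using DERIV_diff[OF \<Phi>''[OF r] G(2)[OF r]] .
      then show "\<exists>y. ((\<lambda>s. \<Phi>' s - G' s) has_real_derivative y) (at r) \<and> y \<le> 0"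
        using le[OF r] by force
    qed
  qed (use \<alpha> in auto)
  then show ?thesis
    by simp
qed

definition xlnx_gap :: "real \<Rightarrow> real \<Rightarrow> real \<Rightarrow> real" where
  "xlnx_gap a b s = (1 - s) * (a * ln a) + s * (b * ln b)
     - ((1 - s) * a + s * b) * ln ((1 - s) * a + s * b)"

lemma continuous_on_xlnx_gap:
  assumes "0 \<le> a" "0 \<le> b"
  shows "continuous_on {0..1} (xlnx_gap a b)"
proof -
  have xlnx: "continuous_on {0..1} (\<lambda>s. ((1 - s) * a + s * b) * ln ((1 - s) * a + s * b))"
    by (rule continuous_on_compose2[OF continuous_on_xlnx, of _ "\<lambda>s. (1 - s) * a + s * b"])
       (use assms in \<open>auto intro!: continuous_intros\<close>)
  show ?thesis
    unfolding xlnx_gap_def by (intro continuous_intros xlnx)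
qed

lemma xlnx_gap_has_real_derivative:
  assumes a: "0 \<le> a" and b: "0 \<le> b" and s: "0 < s" "s < 1"
  shows "(xlnx_gap a b has_real_derivative
            b * ln b - a * ln a - (b - a) * (ln ((1 - s) * a + s * b) + 1)) (at s)"
    and "((\<lambda>s. b * ln b - a * ln a - (b - a) * (ln ((1 - s) * a + s * b) + 1))
           has_real_derivative - ((b - a)\<^sup>2 / ((1 - s) * a + s * b))) (at s)"
proof -
  consider "a = 0 \<and> b = 0" | "0 < (1 - s) * a + s * b"
    using a b s by (metis add_pos_nonneg add_nonneg_pos diff_gt_0_iff_gt less_eq_real_def
        mult_nonneg_nonneg mult_pos_pos)
  note cases = this
  show "(xlnx_gap a b has_real_derivative
           b * ln b - a * ln a - (b - a) * (ln ((1 - s) * a + s * b) + 1)) (at s)"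
  proof (cases rule: cases)
    case 2
    show ?thesis
      unfolding xlnx_gap_def[abs_def]
      by (rule derivative_eq_intros refl | use 2 in \<open>simp add: field_simps\<close>)+
  qed (simp add: xlnx_gap_def[abs_def])
  show "((\<lambda>s. b * ln b - a * ln a - (b - a) * (ln ((1 - s) * a + s * b) + 1))
          has_real_derivative - ((b - a)\<^sup>2 / ((1 - s) * a + s * b))) (at s)"
  proof (cases rule: cases)
    case 2
    show ?thesis
      by (rule derivative_eq_intros refl | use 2 in \<open>simp add: field_simps power2_eq_square\<close>)+
  qed simp
qed

lemma quadratic_le_sq_divide:
  fixes d m h :: real
  assumes "0 \<le> m" and "m = 0 \<Longrightarrow> d = 0"
  shows "2 * d * h - m * h\<^sup>2 \<le> d\<^sup>2 / m"
proof (cases "m = 0")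
  case False
  with assms have "0 < m"
    by simp
  then have "d\<^sup>2 / m - (2 * d * h - m * h\<^sup>2) = (d - m * h)\<^sup>2 / m"
    by (simp add: field_simps power2_eq_square)
  with \<open>0 < m\<close> show ?thesis
    by (metis diff_ge_0_iff_ge divide_nonneg_pos zero_le_power2)
qed (use assms in simp)

lemma green_potential_le_xlnx_gap:
  assumes a: "0 \<le> a" and b: "0 \<le> b" and h: "continuous_on {0..1} h" and \<alpha>: "\<alpha> \<in> {0..1}"
  shows "green_potential (\<lambda>t. 2 * (b - a) * h t - ((1 - t) * a + t * b) * (h t)\<^sup>2) \<alpha>
           \<le> xlnx_gap a b \<alpha>"
proof (rule green_potential_le[OF _ continuous_on_xlnx_gap[OF a b] _ _
      xlnx_gap_has_real_derivative[OF a b]])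
  show "continuous_on {0..1} (\<lambda>t. 2 * (b - a) * h t - ((1 - t) * a + t * b) * (h t)\<^sup>2)"
    by (intro continuous_intros h)
  fix s :: real
  assume s: "0 < s" "s < 1"
  have m: "0 \<le> (1 - s) * a + s * b"
    using a b s by simp
  have "(1 - s) * a = 0 \<and> s * b = 0" if "(1 - s) * a + s * b = 0"
    using that a b s by (smt (verit) mult_nonneg_nonneg)
  with s have "b - a = 0" if "(1 - s) * a + s * b = 0"
    using that by simp
  then show "2 * (b - a) * h s - ((1 - s) * a + s * b) * (h s)\<^sup>2
               \<le> - (- ((b - a)\<^sup>2 / ((1 - s) * a + s * b)))"
    using quadratic_le_sq_divide[OF m, of "b - a" "h s"] by simp
qed (use \<alpha> in \<open>simp_all add: xlnx_gap_def\<close>)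

lemma green_potential_integral_sum:
  fixes \<mu> :: "'j \<Rightarrow> 'a \<Rightarrow> real"
  assumes J: "finite J" and c: "\<And>j. j \<in> J \<Longrightarrow> continuous_on {0..1} (c j)"
    and \<mu>: "\<And>j. j \<in> J \<Longrightarrow> integrable M (\<mu> j)" and \<alpha>: "\<alpha> \<in> {0..1}"
  shows "green_potential (\<lambda>t. \<Sum>j\<in>J. c j t * (LINT z|M. \<mu> j z)) \<alpha>
           = (LINT z|M. green_potential (\<lambda>t. \<Sum>j\<in>J. c j t * \<mu> j z) \<alpha>)"
  using assms by (simp add: green_potential_sum Bochner_Integration.integral_sum)

lemma SNR_ge_inverseD:
  assumes \<epsilon>: "0 < \<epsilon>" and snr: "1 / \<epsilon> \<le> SNR q\<^sub>1 q\<^sub>0 g"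
  shows "expect q\<^sub>1 g \<noteq> expect q\<^sub>0 g"
    and "max (var q\<^sub>1 g) (var q\<^sub>0 g) \<le> \<epsilon> * (expect q\<^sub>1 g - expect q\<^sub>0 g)\<^sup>2"
proof -
  define M where "M = max (var q\<^sub>1 g) (var q\<^sub>0 g)"
  define D where "D = expect q\<^sub>1 g - expect q\<^sub>0 g"
  have bound: "1 / \<epsilon> \<le> D\<^sup>2 / M"
    using snr by (simp add: SNR_def M_def D_def)
  have "0 < M"
  proof (rule ccontr)
    assume "\<not> 0 < M"
    then have "D\<^sup>2 / M \<le> 0"
      by (simp add: divide_nonneg_nonpos)
    with bound \<epsilon> show False
      by (smt (verit) divide_pos_pos)
  qed
  with bound \<epsilon> have "M \<le> \<epsilon> * D\<^sup>2"
    by (simp add: field_simps)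
  with \<open>0 < M\<close> show "expect q\<^sub>1 g \<noteq> expect q\<^sub>0 g" "M \<le> \<epsilon> * D\<^sup>2"
    by (auto simp: D_def)
qed

text \<open>The right-hand side is \<open>\<integral> 2 (q\<^sub>1 - q\<^sub>0) \<beta> (g - c) - m\<^sub>t \<beta>\<^sup>2 (g - c)\<^sup>2\<close> at \<open>\<beta> = w / D\<close> and
  \<open>c = E\<^sub>m\<^sub>t g\<close>, written in terms of the moments of \<open>q\<^sub>0, q\<^sub>1\<close>; its bracket is the variance of
  \<open>g\<close> under \<open>m\<^sub>t\<close>.\<close>

lemma weight_le_test_bound:
  fixes E\<^sub>0 E\<^sub>1 V\<^sub>0 V\<^sub>1 \<epsilon> t :: real
  assumes E: "E\<^sub>1 \<noteq> E\<^sub>0" and var: "max V\<^sub>1 V\<^sub>0 \<le> \<epsilon> * (E\<^sub>1 - E\<^sub>0)\<^sup>2"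
    and \<epsilon>: "0 < \<epsilon>" and t: "t \<in> {0..1}"
  defines "w \<equiv> 1 / (t * (1 - t) + \<epsilon>)" and "c \<equiv> t * E\<^sub>1 + (1 - t) * E\<^sub>0"
  shows "w \<le> 2 * (w / (E\<^sub>1 - E\<^sub>0)) * (E\<^sub>1 - E\<^sub>0)
              - (w / (E\<^sub>1 - E\<^sub>0))\<^sup>2 * ((1 - t) * (V\<^sub>0 + (E\<^sub>0 - c)\<^sup>2) + t * (V\<^sub>1 + (E\<^sub>1 - c)\<^sup>2))"
proof -
  define D where "D = E\<^sub>1 - E\<^sub>0"
  have den: "0 < t * (1 - t) + \<epsilon>"
    using t \<epsilon> by (auto intro!: add_nonneg_pos)
  have "(1 - t) * V\<^sub>0 + t * V\<^sub>1 \<le> (1 - t) * max V\<^sub>1 V\<^sub>0 + t * max V\<^sub>1 V\<^sub>0"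
    using t by (intro add_mono mult_left_mono) auto
  also have "\<dots> \<le> \<epsilon> * D\<^sup>2"
    using var by (simp add: D_def algebra_simps)
  finally have "(1 - t) * (V\<^sub>0 + (E\<^sub>0 - c)\<^sup>2) + t * (V\<^sub>1 + (E\<^sub>1 - c)\<^sup>2) \<le> D\<^sup>2 * (t * (1 - t) + \<epsilon>)"
    by (simp add: c_def D_def algebra_simps power2_eq_square)
  then have "(w / D)\<^sup>2 * ((1 - t) * (V\<^sub>0 + (E\<^sub>0 - c)\<^sup>2) + t * (V\<^sub>1 + (E\<^sub>1 - c)\<^sup>2))
               \<le> (w / D)\<^sup>2 * (D\<^sup>2 * (t * (1 - t) + \<epsilon>))"
    by (rule mult_left_mono) simp
  also have "\<dots> = w"
  proof -
    have "(1 / X / d)\<^sup>2 * (d\<^sup>2 * X) = 1 / X" if "0 < X" "d \<noteq> 0" for X d :: real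
      using that by (simp add: field_simps power2_eq_square)
    from this[OF den] E show ?thesis
      by (simp add: w_def D_def)
  qed
  finally show ?thesis
    using E by (simp add: D_def)
qed

text \<open>Expanding \<open>2 (b - a) h - ((1 - t) a + t b) h\<^sup>2\<close> at \<open>h = \<beta> (y - c)\<close> in the monomials
  \<open>a, b, a y, b y, a y\<^sup>2, b y\<^sup>2\<close>; with \<open>a, b, y = q\<^sub>0 z, q\<^sub>1 z, g z\<close> these integrate to the moments
  \<open>\<integral> q\<^sub>i g\<^sup>k\<close>, which is what lets the Green potential commute with the integral over \<open>z\<close>.\<close>

definition moment_basis :: "real \<Rightarrow> real \<Rightarrow> real \<Rightarrow> nat \<Rightarrow> real" where
  "moment_basis a b y j = [a, b, a * y, b * y, a * y\<^sup>2, b * y\<^sup>2] ! j"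

definition test_coeff :: "real \<Rightarrow> real \<Rightarrow> real \<Rightarrow> nat \<Rightarrow> real" where
  "test_coeff t \<beta> c j = [
      2 * \<beta> * c - (1 - t) * \<beta>\<^sup>2 * c\<^sup>2, - 2 * \<beta> * c - t * \<beta>\<^sup>2 * c\<^sup>2,
      - 2 * \<beta> + 2 * (1 - t) * \<beta>\<^sup>2 * c, 2 * \<beta> + 2 * t * \<beta>\<^sup>2 * c,
      - (1 - t) * \<beta>\<^sup>2, - t * \<beta>\<^sup>2] ! j"

lemma sum_lessThan_6:
  fixes f :: "nat \<Rightarrow> 'a::comm_monoid_add"
  shows "(\<Sum>j<6. f j) = f 0 + f 1 + f 2 + f 3 + f 4 + f 5"
  by (simp add: eval_nat_numeral add.assoc)

lemma sum_test_coeff_moment_basis: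
  "(\<Sum>j<6. test_coeff t \<beta> c j * moment_basis a b y j)
     = 2 * (b - a) * (\<beta> * (y - c)) - ((1 - t) * a + t * b) * (\<beta> * (y - c))\<^sup>2"
  unfolding sum_lessThan_6 by (simp add: test_coeff_def moment_basis_def algebra_simps power2_eq_square)

lemma sum_test_coeff_moments:
  "(\<Sum>j<6. test_coeff t \<beta> c j * [1, 1, E\<^sub>0, E\<^sub>1, V\<^sub>0 + E\<^sub>0\<^sup>2, V\<^sub>1 + E\<^sub>1\<^sup>2] ! j)
     = 2 * \<beta> * (E\<^sub>1 - E\<^sub>0) - \<beta>\<^sup>2 * ((1 - t) * (V\<^sub>0 + (E\<^sub>0 - c)\<^sup>2) + t * (V\<^sub>1 + (E\<^sub>1 - c)\<^sup>2))"
  unfolding sum_lessThan_6 by (simp add: test_coeff_def algebra_simps power2_eq_square)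

lemma continuous_on_test_coeff:
  assumes "continuous_on S \<beta>" "continuous_on S c" "j < 6"
  shows "continuous_on S (\<lambda>t. test_coeff t (\<beta> t) (c t) j)"
  using assms(3) unfolding test_coeff_def
  by (auto simp: less_Suc_eq numeral_eq_Suc intro!: continuous_intros assms(1,2))

lemma integral_moment_basis:
  fixes q\<^sub>0 q\<^sub>1 g :: "'a::euclidean_space \<Rightarrow> real"
  assumes q\<^sub>0: "is_density q\<^sub>0" and q\<^sub>1: "is_density q\<^sub>1"
    and moments: "integrable lborel (\<lambda>z. q\<^sub>0 z * g z)" "integrable lborel (\<lambda>z. q\<^sub>1 z * g z)"
      "integrable lborel (\<lambda>z. q\<^sub>0 z * (g z)\<^sup>2)" "integrable lborel (\<lambda>z. q\<^sub>1 z * (g z)\<^sup>2)"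
    and j: "j < 6"
  shows "has_bochner_integral lborel (\<lambda>z. moment_basis (q\<^sub>0 z) (q\<^sub>1 z) (g z) j)
    ([1, 1, expect q\<^sub>0 g, expect q\<^sub>1 g, var q\<^sub>0 g + (expect q\<^sub>0 g)\<^sup>2, var q\<^sub>1 g + (expect q\<^sub>1 g)\<^sup>2] ! j)"
  using j assms unfolding moment_basis_def
  by (auto simp: less_Suc_eq numeral_eq_Suc has_bochner_integral_iff is_density_def
      expect_def var_def)

lemma green_potential_weight_le_integral_xlnx_gap:
  fixes q\<^sub>0 q\<^sub>1 g :: "'a::euclidean_space \<Rightarrow> real"
  assumes q\<^sub>0: "is_density q\<^sub>0" and q\<^sub>1: "is_density q\<^sub>1"
    and moments: "integrable lborel (\<lambda>z. q\<^sub>0 z * g z)" "integrable lborel (\<lambda>z. q\<^sub>1 z * g z)"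
      "integrable lborel (\<lambda>z. q\<^sub>0 z * (g z)\<^sup>2)" "integrable lborel (\<lambda>z. q\<^sub>1 z * (g z)\<^sup>2)"
    and gap: "integrable lborel (\<lambda>z. xlnx_gap (q\<^sub>0 z) (q\<^sub>1 z) \<alpha>)"
    and \<epsilon>: "0 < \<epsilon>" and snr: "1 / \<epsilon> \<le> SNR q\<^sub>1 q\<^sub>0 g" and \<alpha>: "\<alpha> \<in> {0..1}"
  shows "green_potential (\<lambda>t. 1 / (t * (1 - t) + \<epsilon>)) \<alpha>
           \<le> (LINT z|lborel. xlnx_gap (q\<^sub>0 z) (q\<^sub>1 z) \<alpha>)"
proof -
  define E\<^sub>0 where "E\<^sub>0 = expect q\<^sub>0 g"
  define E\<^sub>1 where "E\<^sub>1 = expect q\<^sub>1 g"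
  define V\<^sub>0 where "V\<^sub>0 = var q\<^sub>0 g"
  define V\<^sub>1 where "V\<^sub>1 = var q\<^sub>1 g"
  define w where "w t = 1 / (t * (1 - t) + \<epsilon>)" for t
  define \<beta> where "\<beta> t = w t / (E\<^sub>1 - E\<^sub>0)" for t
  define c where "c t = t * E\<^sub>1 + (1 - t) * E\<^sub>0" for t
  define coeff where "coeff j t = test_coeff t (\<beta> t) (c t) j" for j t
  define \<mu> where "\<mu> j z = moment_basis (q\<^sub>0 z) (q\<^sub>1 z) (g z) j" for j z
  have E: "E\<^sub>1 \<noteq> E\<^sub>0" and V: "max V\<^sub>1 V\<^sub>0 \<le> \<epsilon> * (E\<^sub>1 - E\<^sub>0)\<^sup>2"
    using SNR_ge_inverseD[OF \<epsilon> snr] by (simp_all add: E\<^sub>0_def E\<^sub>1_def V\<^sub>0_def V\<^sub>1_def)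
  have "0 < t * (1 - t) + \<epsilon>" if "t \<in> {0..1}" for t
    using that \<epsilon> by (auto intro!: add_nonneg_pos mult_nonneg_nonneg)
  then have w_cont: "continuous_on {0..1} w"
    unfolding w_def by (intro continuous_intros) force
  then have \<beta>_cont: "continuous_on {0..1} \<beta>"
    unfolding \<beta>_def using E by (intro continuous_intros) auto
  have coeff_cont: "continuous_on {0..1} (coeff j)" if "j \<in> {..<6}" for j
    unfolding coeff_def c_def using that \<beta>_cont
    by (intro continuous_on_test_coeff continuous_intros) auto
  have moment: "has_bochner_integral lborel (\<mu> j) ([1, 1, E\<^sub>0, E\<^sub>1, V\<^sub>0 + E\<^sub>0\<^sup>2, V\<^sub>1 + E\<^sub>1\<^sup>2] ! j)"
    if "j \<in> {..<6}" for j
    unfolding \<mu>_def[abs_def] E\<^sub>0_def E\<^sub>1_def V\<^sub>0_def V\<^sub>1_def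
    using integral_moment_basis[OF q\<^sub>0 q\<^sub>1 moments] that by simp
  have weight_le: "w t \<le> (\<Sum>j<6. coeff j t * (LINT z|lborel. \<mu> j z))" if "t \<in> {0..1}" for t
    using weight_le_test_bound[OF E V \<epsilon> that] moment
    by (simp add: has_bochner_integral_iff coeff_def sum_test_coeff_moments \<beta>_def w_def c_def)
  have pointwise: "green_potential (\<lambda>t. \<Sum>j<6. coeff j t * \<mu> j z) \<alpha> \<le> xlnx_gap (q\<^sub>0 z) (q\<^sub>1 z) \<alpha>"
    for z
    using green_potential_le_xlnx_gap[of "q\<^sub>0 z" "q\<^sub>1 z" "\<lambda>t. \<beta> t * (g z - c t)"] q\<^sub>0 q\<^sub>1 \<alpha> \<beta>_cont
    by (simp add: coeff_def \<mu>_def sum_test_coeff_moment_basis is_density_def c_def continuous_intros)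
  have "green_potential (\<lambda>t. \<Sum>j<6. coeff j t * \<mu> j z) \<alpha>
          = (\<Sum>j<6. green_potential (coeff j) \<alpha> * \<mu> j z)" for z
    using coeff_cont \<alpha> by (intro green_potential_sum) auto
  then have integrable: "integrable lborel (\<lambda>z. green_potential (\<lambda>t. \<Sum>j<6. coeff j t * \<mu> j z) \<alpha>)"
    using moment by (auto simp: has_bochner_integral_iff)
  have "green_potential w \<alpha> \<le> green_potential (\<lambda>t. \<Sum>j<6. coeff j t * (LINT z|lborel. \<mu> j z)) \<alpha>"
    using w_cont coeff_cont weight_le \<alpha>
    by (intro green_potential_mono continuous_on_sum continuous_intros) auto
  also have "\<dots> = (LINT z|lborel. green_potential (\<lambda>t. \<Sum>j<6. coeff j t * \<mu> j z) \<alpha>)"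
    using coeff_cont moment \<alpha> by (intro green_potential_integral_sum) (auto simp: has_bochner_integral_iff)
  also have "\<dots> \<le> (LINT z|lborel. xlnx_gap (q\<^sub>0 z) (q\<^sub>1 z) \<alpha>)"
    by (rule integral_mono[OF integrable gap pointwise])
  finally show ?thesis
    unfolding w_def[abs_def] .
qed

lemma mix_1 [simp]: "mix 1 q\<^sub>1 q\<^sub>0 = q\<^sub>1" and mix_0 [simp]: "mix 0 q\<^sub>1 q\<^sub>0 = q\<^sub>0"
  by (simp_all add: mix_def[abs_def])

lemma integral_mix:
  fixes q\<^sub>0 q\<^sub>1 l :: "'a \<Rightarrow> real"
  assumes "integrable M (\<lambda>z. q\<^sub>1 z * l z)" "integrable M (\<lambda>z. q\<^sub>0 z * l z)"
  shows "(LINT z|M. mix s q\<^sub>1 q\<^sub>0 z * l z)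
           = s * (LINT z|M. q\<^sub>1 z * l z) + (1 - s) * (LINT z|M. q\<^sub>0 z * l z)"
  using assms by (simp add: mix_def distrib_right mult.assoc)

lemma mult_ln_divide:
  fixes m p :: real
  assumes "0 \<le> m" "0 < p"
  shows "m * ln (m / p) = m * ln m - m * ln p"
  using assms by (cases "m = 0") (simp_all add: ln_div algebra_simps)

lemma has_bochner_integral_xlnx_gap:
  fixes q\<^sub>0 q\<^sub>1 p :: "'a::euclidean_space \<Rightarrow> real"
  assumes q\<^sub>0: "\<And>z. 0 \<le> q\<^sub>0 z" and q\<^sub>1: "\<And>z. 0 \<le> q\<^sub>1 z" and p: "\<And>z. 0 < p z"
    and KL: "\<And>s. s \<in> {0..1} \<Longrightarrow>
      integrable lborel (\<lambda>z. mix s q\<^sub>1 q\<^sub>0 z * ln (mix s q\<^sub>1 q\<^sub>0 z / p z))"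
    and \<alpha>: "\<alpha> \<in> {0..1}"
  shows "has_bochner_integral lborel (\<lambda>z. xlnx_gap (q\<^sub>0 z) (q\<^sub>1 z) \<alpha>)
           (\<alpha> * KL q\<^sub>1 p + (1 - \<alpha>) * KL q\<^sub>0 p - KL (mix \<alpha> q\<^sub>1 q\<^sub>0) p)"
proof -
  define \<phi> where "\<phi> s z = mix s q\<^sub>1 q\<^sub>0 z * ln (mix s q\<^sub>1 q\<^sub>0 z / p z)" for s z
  have "0 \<le> mix \<alpha> q\<^sub>1 q\<^sub>0 z" for z
    using q\<^sub>0[of z] q\<^sub>1[of z] \<alpha> by (simp add: mix_def)
  then have "xlnx_gap (q\<^sub>0 z) (q\<^sub>1 z) \<alpha> = \<alpha> * \<phi> 1 z + (1 - \<alpha>) * \<phi> 0 z - \<phi> \<alpha> z" for z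
    unfolding \<phi>_def using q\<^sub>0 q\<^sub>1 p
    by (simp add: mult_ln_divide xlnx_gap_def) (simp add: mix_def algebra_simps)
  moreover have "has_bochner_integral lborel (\<lambda>z. \<alpha> * \<phi> 1 z + (1 - \<alpha>) * \<phi> 0 z - \<phi> \<alpha> z)
      (\<alpha> * integral\<^sup>L lborel (\<phi> 1) + (1 - \<alpha>) * integral\<^sup>L lborel (\<phi> 0) - integral\<^sup>L lborel (\<phi> \<alpha>))"
    using KL[of 1] KL[of 0] KL[OF \<alpha>] unfolding \<phi>_def[abs_def]
    by (intro has_bochner_integral_diff has_bochner_integral_add has_bochner_integral_mult_right
        has_bochner_integral_integrable) simp_all
  ultimately show ?thesis
    by (simp add: KL_def \<phi>_def[abs_def])
qed

theorem lemma3: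
  fixes x :: "real^'dx" and u :: "real^'du"
    and f :: "real^'d \<Rightarrow> real^'dx" and p_eps :: "real^'dx \<Rightarrow> real"
    and T :: "'d \<Rightarrow> real \<Rightarrow> real" and lam :: "'d \<Rightarrow> real^'du \<Rightarrow> real"
    and A :: "real^'du \<Rightarrow> real" and B :: "real \<Rightarrow> real"
    and q_enc :: "real^'dx \<Rightarrow> real^'d \<Rightarrow> real"
    and q_post :: "real^'dx \<Rightarrow> real^'du \<Rightarrow> real^'d \<Rightarrow> real"
    and g :: "real^'d \<Rightarrow> real" and \<epsilon> \<alpha> :: real
  assumes dims: "CARD('d) < CARD('dx)"
    and noise: "is_density p_eps"
    and prior: "is_density (prior_dens T lam A B u)"
    and enc: "is_density (q_enc x)"
    and post: "is_density (q_post x u)"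
    and fin_lik: "\<forall>a\<in>{0..1}. integrable lborel
        (\<lambda>z. mix a (q_enc x) (q_post x u) z * ln (dec_dens p_eps f x z))"
    and fin_lik_pos: "AE z in lborel. (0 < q_enc x z \<or> 0 < q_post x u z) \<longrightarrow> 0 < dec_dens p_eps f x z"
    and fin_KL: "\<forall>a\<in>{0..1}. integrable lborel
        (\<lambda>z. mix a (q_enc x) (q_post x u) z
              * ln (mix a (q_enc x) (q_post x u) z / prior_dens T lam A B u z))"
    and fin_g: "integrable lborel (\<lambda>z. q_enc x z * g z)" "integrable lborel (\<lambda>z. q_post x u z * g z)"
               "integrable lborel (\<lambda>z. q_enc x z * (g z)\<^sup>2)" "integrable lborel (\<lambda>z. q_post x u z * (g z)\<^sup>2)"
    and eps: "\<epsilon> > 0"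
    and snr: "SNR (q_enc x) (q_post x u) g \<ge> 1 / \<epsilon>"
    and alpha: "\<alpha> \<in> {0..1}"
  shows "ELBO p_eps f T lam A B q_enc q_post \<alpha> x u - ELBO p_eps f T lam A B q_enc q_post 0 x u
         \<ge> LB \<alpha> \<epsilon> (Delta10 p_eps f T lam A B q_enc q_post x u)"
proof -
  let ?q\<^sub>1 = "q_enc x" and ?q\<^sub>0 = "q_post x u" and ?p = "prior_dens T lam A B u"
  let ?lik = "\<lambda>q. LINT z|lborel. q z * ln (dec_dens p_eps f x z)"
  have ELBO: "ELBO p_eps f T lam A B q_enc q_post s x u
      = s * ?lik ?q\<^sub>1 + (1 - s) * ?lik ?q\<^sub>0 - KL (mix s ?q\<^sub>1 ?q\<^sub>0) ?p" for s
    using bspec[OF fin_lik, of 1] bspec[OF fin_lik, of 0] by (simp add: ELBO_def integral_mix)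
  have "has_bochner_integral lborel (\<lambda>z. xlnx_gap (?q\<^sub>0 z) (?q\<^sub>1 z) \<alpha>)
      (\<alpha> * KL ?q\<^sub>1 ?p + (1 - \<alpha>) * KL ?q\<^sub>0 ?p - KL (mix \<alpha> ?q\<^sub>1 ?q\<^sub>0) ?p)"
    using enc post fin_KL alpha
    by (intro has_bochner_integral_xlnx_gap) (auto simp: is_density_def prior_dens_def prod_pos)
  then have "green_potential (\<lambda>t. 1 / (t * (1 - t) + \<epsilon>)) \<alpha>
      \<le> \<alpha> * KL ?q\<^sub>1 ?p + (1 - \<alpha>) * KL ?q\<^sub>0 ?p - KL (mix \<alpha> ?q\<^sub>1 ?q\<^sub>0) ?p"
    using green_potential_weight_le_integral_xlnx_gap[OF post enc fin_g(2,1,4,3) _ eps snr alpha]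
    by (simp add: has_bochner_integral_iff)
  moreover have "LB \<alpha> \<epsilon> \<Delta> = \<alpha> * \<Delta> + green_potential (\<lambda>t. 1 / (t * (1 - t) + \<epsilon>)) \<alpha>" for \<Delta>
    by (simp add: LB_def green_potential_def algebra_simps)
  ultimately show ?thesis
    by (simp add: Delta10_def ELBO algebra_simps)
qed

end
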